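(* Let $\tilde X\in\mathbb{R}^{n\times k}$ have columns of unit Euclidean norm (i.e. $\Gamma_{\ell\ell}=1$ for all $\ell$, where $\Gamma=\tilde X^t\tilde X$). Let $0<\nu<1$ and let $\mathcal{I}\subset\{1,\dots,k\}$ satisfy $\tau(\mathcal{I})\le\nu$. Then for every $x\in\mathbb{R}^{\#(\mathcal{I})}$, $$\|x\|_2^2(1-\nu)\le x^t\,\Gamma_{\mathcal{I}}\,x\le \|x\|_2^2(1+\nu).$$
   Context: $\mathcal{G}_1,\dots,\mathcal{G}_p$ is a partition of $\{1,\dots,k\}$ into groups with $t_j=\#\mathcal{G}_j$; each index $\ell$ is written $\ell=(j,t)$ with $j$ the group containing $\ell$ and $t\in\{1,\dots,t_j\}$ its rank inside $\mathcal{G}_j$. $\Gamma_{\mathcal{I}}=\tilde X_{\mathcal{I}}^t\tilde X_{\mathcal{I}}$ where $\tilde X_{\mathcal{I}}$ is the submatrix of columns indexed by $\mathcal{I}$. $\gamma_{BT}=\sup\{|\Gamma_{(j,t)(j',t')}|: t\neq t'\}$ (over all $j,j'$ and admissible ranks), $\gamma_{BG}=\sup\{|\Gamma_{(j,t)(j',t)}|: j\ne j',\ t\le t_j\wedge t_{j'}\}$, and $\tau(\mathcal{I})=\#(\mathcal{I})\,\gamma_{BT}+\#\{j:\exists t,\ (j,t)\in\mathcal{I}\}\,\gamma_{BG}$. *)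

theory Defs
  imports Complex_Main
begin

text \<open>The design matrix X is given by its entries X i l, rows i in {1..n},
  columns l in {1..k}. Gram matrix entries Gamma_{l l'}.\<close>
definition gram :: "nat \<Rightarrow> (nat \<Rightarrow> nat \<Rightarrow> real) \<Rightarrow> nat \<Rightarrow> nat \<Rightarrow> real" where
  "gram n X l l' = (\<Sum>i=1..n. X i l * X i l')"

definition is_partition :: "nat \<Rightarrow> nat \<Rightarrow> (nat \<Rightarrow> nat set) \<Rightarrow> bool" where
  "is_partition k p G \<longleftrightarrow>
     (\<forall>j\<in>{1..p}. G j \<noteq> {}) \<and>
     (\<forall>j\<in>{1..p}. \<forall>j'\<in>{1..p}. j \<noteq> j' \<longrightarrow> G j \<inter> G j' = {}) \<and>
     (\<Union>j\<in>{1..p}. G j) = {1..k}"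

definition grp :: "nat \<Rightarrow> (nat \<Rightarrow> nat set) \<Rightarrow> nat \<Rightarrow> nat" where
  "grp p G l = (THE j. j \<in> {1..p} \<and> l \<in> G j)"

definition rnk :: "nat \<Rightarrow> (nat \<Rightarrow> nat set) \<Rightarrow> nat \<Rightarrow> nat" where
  "rnk p G l = card {m \<in> G (grp p G l). m \<le> l}"

text \<open>gamma_BT and gamma_BG (supremum of a set of absolute values; the empty
  supremum is taken to be 0).\<close>
definition gamma_BT :: "nat \<Rightarrow> nat \<Rightarrow> (nat \<Rightarrow> nat \<Rightarrow> real) \<Rightarrow> nat \<Rightarrow> (nat \<Rightarrow> nat set) \<Rightarrow> real" where
  "gamma_BT n k X p G = Max (insert 0
     {\<bar>gram n X l l'\<bar> | l l'. l \<in> {1..k} \<and> l' \<in> {1..k} \<and> rnk p G l \<noteq> rnk p G l'})"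

definition gamma_BG :: "nat \<Rightarrow> nat \<Rightarrow> (nat \<Rightarrow> nat \<Rightarrow> real) \<Rightarrow> nat \<Rightarrow> (nat \<Rightarrow> nat set) \<Rightarrow> real" where
  "gamma_BG n k X p G = Max (insert 0
     {\<bar>gram n X l l'\<bar> | l l'. l \<in> {1..k} \<and> l' \<in> {1..k} \<and>
        grp p G l \<noteq> grp p G l' \<and> rnk p G l = rnk p G l'})"

definition tau :: "nat \<Rightarrow> nat \<Rightarrow> (nat \<Rightarrow> nat \<Rightarrow> real) \<Rightarrow> nat \<Rightarrow> (nat \<Rightarrow> nat set) \<Rightarrow> nat set \<Rightarrow> real" where
  "tau n k X p G I = real (card I) * gamma_BT n k X p G
                    + real (card (grp p G ` I)) * gamma_BG n k X p G"

end

theory Submission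
  imports Defs
begin

text \<open>Write \<open>\<Gamma>\<^sub>\<I> = Id + E\<close>, using the unit diagonal. An off-diagonal pair \<open>(l, l')\<close> of \<open>\<I>\<close>
  either has different ranks, and then \<open>|\<Gamma>\<^sub>l\<^sub>l\<^sub>'| \<le> \<gamma>\<^sub>B\<^sub>T\<close>, or equal ranks and hence (since an
  index is determined by its group and rank) different groups, and then \<open>|\<Gamma>\<^sub>l\<^sub>l\<^sub>'| \<le> \<gamma>\<^sub>B\<^sub>G\<close>.
  For a symmetric relation in which every index has at most \<open>c\<close> partners,
  \<open>2|x\<^sub>l||x\<^sub>l\<^sub>'| \<le> x\<^sub>l\<^sup>2 + x\<^sub>l\<^sub>'\<^sup>2\<close> bounds the restricted sum of \<open>|x\<^sub>l||x\<^sub>l\<^sub>'|\<close> by \<open>c \<parallel>x\<parallel>\<^sup>2\<close>.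
  An index has at most \<open>#\<I>\<close> partners of the first kind and at most as many partners of
  the second kind as \<open>\<I>\<close> meets groups, so \<open>|x\<^sup>t E x| \<le> \<tau>(\<I>) \<parallel>x\<parallel>\<^sup>2 \<le> \<nu> \<parallel>x\<parallel>\<^sup>2\<close>.\<close>

lemma sum_restrict_abs_mult_le:
  fixes x :: "'a \<Rightarrow> real"
  assumes "finite I" and "symp R"
    and card_le: "\<And>l. l \<in> I \<Longrightarrow> real (card {l'\<in>I. R l l'}) \<le> c"
  shows "(\<Sum>l\<in>I. \<Sum>l'\<in>{l'\<in>I. R l l'}. \<bar>x l\<bar> * \<bar>x l'\<bar>) \<le> c * (\<Sum>l\<in>I. (x l)\<^sup>2)"
proof -
  let ?h = "\<lambda>l. (x l)\<^sup>2 / 2"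
  have swap: "(\<Sum>l\<in>I. \<Sum>l'\<in>{l'\<in>I. R l l'}. ?h l') = (\<Sum>l\<in>I. \<Sum>l'\<in>{l'\<in>I. R l l'}. ?h l)"
  proof -
    have "(\<Sum>l\<in>I. \<Sum>l'\<in>{l'\<in>I. R l l'}. ?h l') = (\<Sum>l'\<in>I. \<Sum>l\<in>{l\<in>I. R l l'}. ?h l')"
      using \<open>finite I\<close> by (simp add: sum.swap_restrict)
    also have "\<dots> = (\<Sum>l'\<in>I. \<Sum>l\<in>{l\<in>I. R l' l}. ?h l')"
      using \<open>symp R\<close> by (intro sum.cong refl arg_cong[where f = "sum _"]) (auto dest: sympD)
    finally show ?thesis .
  qed
  have "(\<Sum>l\<in>I. \<Sum>l'\<in>{l'\<in>I. R l l'}. \<bar>x l\<bar> * \<bar>x l'\<bar>)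
      \<le> (\<Sum>l\<in>I. \<Sum>l'\<in>{l'\<in>I. R l l'}. ?h l + ?h l')"
  proof (intro sum_mono)
    fix l l'
    show "\<bar>x l\<bar> * \<bar>x l'\<bar> \<le> ?h l + ?h l'"
      using sum_squares_ge_zero[of "\<bar>x l\<bar> - \<bar>x l'\<bar>" 0]
      by (simp add: power2_eq_square algebra_simps)
  qed
  also have "\<dots> = 2 * (\<Sum>l\<in>I. ?h l * real (card {l'\<in>I. R l l'}))"
    using swap by (simp add: sum.distrib mult.commute)
  also have "\<dots> \<le> 2 * (\<Sum>l\<in>I. ?h l * c)"
    using card_le by (intro mult_left_mono sum_mono) auto
  also have "\<dots> = c * (\<Sum>l\<in>I. (x l)\<^sup>2)"
    by (simp add: sum_distrib_left sum_divide_distrib algebra_simps)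
  finally show ?thesis .
qed

lemma abs_quadratic_form_restrict_le:
  fixes x :: "'a \<Rightarrow> real" and A :: "'a \<Rightarrow> 'a \<Rightarrow> real"
  assumes "finite I" and "symp R" and "0 \<le> b"
    and "\<And>l. l \<in> I \<Longrightarrow> real (card {l'\<in>I. R l l'}) \<le> c"
    and entry_le: "\<And>l l'. l \<in> I \<Longrightarrow> l' \<in> I \<Longrightarrow> R l l' \<Longrightarrow> \<bar>A l l'\<bar> \<le> b"
  shows "\<bar>\<Sum>l\<in>I. \<Sum>l'\<in>{l'\<in>I. R l l'}. x l * A l l' * x l'\<bar> \<le> b * c * (\<Sum>l\<in>I. (x l)\<^sup>2)"
proof -
  have "\<bar>\<Sum>l\<in>I. \<Sum>l'\<in>{l'\<in>I. R l l'}. x l * A l l' * x l'\<bar>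
      \<le> (\<Sum>l\<in>I. \<Sum>l'\<in>{l'\<in>I. R l l'}. \<bar>x l * A l l' * x l'\<bar>)"
    by (rule order_trans[OF sum_abs]) (intro sum_mono sum_abs)
  also have "\<dots> \<le> (\<Sum>l\<in>I. \<Sum>l'\<in>{l'\<in>I. R l l'}. b * (\<bar>x l\<bar> * \<bar>x l'\<bar>))"
  proof (intro sum_mono)
    fix l l' assume "l \<in> I" "l' \<in> {l'\<in>I. R l l'}"
    then have "\<bar>A l l'\<bar> * (\<bar>x l\<bar> * \<bar>x l'\<bar>) \<le> b * (\<bar>x l\<bar> * \<bar>x l'\<bar>)"
      using entry_le by (intro mult_right_mono) auto
    then show "\<bar>x l * A l l' * x l'\<bar> \<le> b * (\<bar>x l\<bar> * \<bar>x l'\<bar>)"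
      by (simp add: abs_mult mult_ac)
  qed
  also have "\<dots> = b * (\<Sum>l\<in>I. \<Sum>l'\<in>{l'\<in>I. R l l'}. \<bar>x l\<bar> * \<bar>x l'\<bar>)"
    by (simp add: sum_distrib_left)
  also have "\<dots> \<le> b * (c * (\<Sum>l\<in>I. (x l)\<^sup>2))"
    using assms(1,2,4) \<open>0 \<le> b\<close> by (intro mult_left_mono sum_restrict_abs_mult_le) auto
  finally show ?thesis by simp
qed

lemma quadratic_form_split_by_key:
  fixes x :: "'a \<Rightarrow> real" and A :: "'a \<Rightarrow> 'a \<Rightarrow> real" and r :: "'a \<Rightarrow> 'b"
  assumes "finite I" and "\<And>l. l \<in> I \<Longrightarrow> A l l = 1"
  shows "(\<Sum>l\<in>I. \<Sum>l'\<in>I. x l * A l l' * x l')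
    = (\<Sum>l\<in>I. (x l)\<^sup>2)
      + (\<Sum>l\<in>I. \<Sum>l'\<in>{l'\<in>I. r l \<noteq> r l'}. x l * A l l' * x l')
      + (\<Sum>l\<in>I. \<Sum>l'\<in>{l'\<in>I. l \<noteq> l' \<and> r l = r l'}. x l * A l l' * x l')"
proof -
  have "(\<Sum>l'\<in>I. x l * A l l' * x l') = (x l)\<^sup>2
      + (\<Sum>l'\<in>{l'\<in>I. r l \<noteq> r l'}. x l * A l l' * x l')
      + (\<Sum>l'\<in>{l'\<in>I. l \<noteq> l' \<and> r l = r l'}. x l * A l l' * x l')"
    if "l \<in> I" for l
  proof -
    have I_eq: "I = {l} \<union> {l'\<in>I. r l \<noteq> r l'} \<union> {l'\<in>I. l \<noteq> l' \<and> r l = r l'}"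
      using \<open>l \<in> I\<close> by auto
    show ?thesis
      using \<open>finite I\<close> assms(2)[OF \<open>l \<in> I\<close>]
      by (subst I_eq, subst sum.union_disjoint, auto simp: sum.union_disjoint power2_eq_square)
  qed
  then show ?thesis by (simp add: sum.distrib)
qed

lemma inj_on_card_le_filter:
  fixes A :: "'a :: linorder set"
  assumes "finite A"
  shows "inj_on (\<lambda>a. card {m\<in>A. m \<le> a}) A"
proof (rule strict_mono_on_imp_inj_on, rule strict_mono_onI)
  fix a b assume "a \<in> A" "b \<in> A" "a < b"
  then have "b \<in> {m\<in>A. m \<le> b} - {m\<in>A. m \<le> a}" by auto
  then have "{m\<in>A. m \<le> a} \<subset> {m\<in>A. m \<le> b}" using \<open>a < b\<close> by auto
  then show "card {m\<in>A. m \<le> a} < card {m\<in>A. m \<le> b}"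
    using \<open>finite A\<close> by (intro psubset_card_mono) auto
qed

lemma grp_spec:
  assumes "is_partition k p G" and "l \<in> {1..k}"
  shows "grp p G l \<in> {1..p} \<and> l \<in> G (grp p G l)"
proof -
  from assms obtain j where j: "j \<in> {1..p}" "l \<in> G j"
    unfolding is_partition_def by blast
  with assms(1) have "grp p G l = j"
    unfolding grp_def is_partition_def by (intro the_equality) blast+
  with j show ?thesis by simp
qed

lemma grp_rnk_inj:
  assumes P: "is_partition k p G" and "l \<in> {1..k}" "l' \<in> {1..k}"
    and "grp p G l = grp p G l'" and "rnk p G l = rnk p G l'"
  shows "l = l'"
proof -
  let ?j = "grp p G l"
  have "?j \<in> {1..p}" using grp_spec[OF P \<open>l \<in> {1..k}\<close>] by simp
  with P have "G ?j \<subseteq> {1..k}"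
    unfolding is_partition_def by blast
  then have "finite (G ?j)" by (rule finite_subset) simp
  moreover have "l \<in> G ?j" "l' \<in> G ?j"
    using grp_spec[OF P \<open>l \<in> {1..k}\<close>] grp_spec[OF P \<open>l' \<in> {1..k}\<close>] assms(4) by auto
  moreover have "card {m\<in>G ?j. m \<le> l} = card {m\<in>G ?j. m \<le> l'}"
    using assms(4,5) unfolding rnk_def by simp
  ultimately show ?thesis
    by (blast dest: inj_onD[OF inj_on_card_le_filter])
qed

lemma card_rnk_eq_le_card_grp_image:
  assumes "is_partition k p G" and "I \<subseteq> {1..k}"
  shows "card {l\<in>I. rnk p G l = t} \<le> card (grp p G ` I)"
proof -
  have "inj_on (grp p G) {l\<in>I. rnk p G l = t}"
  proof (rule inj_onI)
    fix a b assume "a \<in> {l\<in>I. rnk p G l = t}" "b \<in> {l\<in>I. rnk p G l = t}" "grp p G a = grp p G b"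
    then show "a = b" using grp_rnk_inj[OF assms(1)] assms(2) by (metis (mono_tags) mem_Collect_eq subsetD)
  qed
  then have "card {l\<in>I. rnk p G l = t} = card (grp p G ` {l\<in>I. rnk p G l = t})"
    by (simp add: card_image)
  also have "\<dots> \<le> card (grp p G ` I)"
    using assms(2) by (intro card_mono) (auto intro: finite_subset)
  finally show ?thesis .
qed

lemma finite_abs_gram_set:
  "finite {\<bar>gram n X l l'\<bar> | l l'. l \<in> {1..k} \<and> l' \<in> {1..k} \<and> Q l l'}"
proof (rule finite_subset)
  show "{\<bar>gram n X l l'\<bar> | l l'. l \<in> {1..k} \<and> l' \<in> {1..k} \<and> Q l l'}
    \<subseteq> (\<lambda>(l, l'). \<bar>gram n X l l'\<bar>) ` ({1..k} \<times> {1..k})" by auto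
qed simp

lemma gamma_BT_nonneg: "0 \<le> gamma_BT n k X p G"
  unfolding gamma_BT_def by (intro Max_ge finite.insertI finite_abs_gram_set) simp

lemma gamma_BG_nonneg: "0 \<le> gamma_BG n k X p G"
  unfolding gamma_BG_def by (intro Max_ge finite.insertI finite_abs_gram_set) simp

lemma abs_gram_le_gamma_BT:
  assumes "l \<in> {1..k}" "l' \<in> {1..k}" "rnk p G l \<noteq> rnk p G l'"
  shows "\<bar>gram n X l l'\<bar> \<le> gamma_BT n k X p G"
  unfolding gamma_BT_def using assms by (intro Max_ge finite.insertI finite_abs_gram_set) blast

lemma abs_gram_le_gamma_BG:
  assumes "l \<in> {1..k}" "l' \<in> {1..k}" "grp p G l \<noteq> grp p G l'" "rnk p G l = rnk p G l'"
  shows "\<bar>gram n X l l'\<bar> \<le> gamma_BG n k X p G"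
  unfolding gamma_BG_def using assms by (intro Max_ge finite.insertI finite_abs_gram_set) blast

theorem lemma1:
  fixes n k p :: nat and X :: "nat \<Rightarrow> nat \<Rightarrow> real" and G :: "nat \<Rightarrow> nat set"
    and \<nu> :: real and I :: "nat set" and x :: "nat \<Rightarrow> real"
  assumes "is_partition k p G"
    and "\<forall>l\<in>{1..k}. gram n X l l = 1"
    and "0 < \<nu>" and "\<nu> < 1"
    and "I \<subseteq> {1..k}"
    and "tau n k X p G I \<le> \<nu>"
  shows "(\<Sum>l\<in>I. (x l)\<^sup>2) * (1 - \<nu>) \<le> (\<Sum>l\<in>I. \<Sum>l'\<in>I. x l * gram n X l l' * x l')
    \<and> (\<Sum>l\<in>I. \<Sum>l'\<in>I. x l * gram n X l l' * x l') \<le> (\<Sum>l\<in>I. (x l)\<^sup>2) * (1 + \<nu>)"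
proof -
  have "finite I" using assms(5) finite_subset by blast
  let ?S = "\<Sum>l\<in>I. (x l)\<^sup>2"
  let ?A = "gram n X" and ?r = "rnk p G"
  let ?E1 = "\<Sum>l\<in>I. \<Sum>l'\<in>{l'\<in>I. ?r l \<noteq> ?r l'}. x l * ?A l l' * x l'"
  let ?E2 = "\<Sum>l\<in>I. \<Sum>l'\<in>{l'\<in>I. l \<noteq> l' \<and> ?r l = ?r l'}. x l * ?A l l' * x l'"
  have "\<bar>?E1\<bar> \<le> gamma_BT n k X p G * real (card I) * ?S"
    using \<open>finite I\<close> assms(5)
    by (intro abs_quadratic_form_restrict_le gamma_BT_nonneg abs_gram_le_gamma_BT)
       (auto simp: symp_def card_mono)
  moreover have "\<bar>?E2\<bar> \<le> gamma_BG n k X p G * real (card (grp p G ` I)) * ?S"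
  proof (intro abs_quadratic_form_restrict_le gamma_BG_nonneg abs_gram_le_gamma_BG)
    fix l
    have "card {l'\<in>I. l \<noteq> l' \<and> ?r l = ?r l'} \<le> card {l'\<in>I. ?r l' = ?r l}"
      using \<open>finite I\<close> by (intro card_mono) auto
    also have "\<dots> \<le> card (grp p G ` I)"
      using assms(1,5) by (rule card_rnk_eq_le_card_grp_image)
    finally show "real (card {l'\<in>I. l \<noteq> l' \<and> ?r l = ?r l'}) \<le> real (card (grp p G ` I))"
      by simp
  qed (use \<open>finite I\<close> assms(5) grp_rnk_inj[OF assms(1)] in \<open>auto simp: symp_def; blast\<close>)+
  ultimately have "\<bar>?E1 + ?E2\<bar> \<le> tau n k X p G I * ?S"
    unfolding tau_def by (simp add: algebra_simps)
  also have "\<dots> \<le> \<nu> * ?S" using assms(6) by (intro mult_right_mono sum_nonneg) auto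
  finally have "\<bar>?E1 + ?E2\<bar> \<le> \<nu> * ?S" .
  moreover have "(\<Sum>l\<in>I. \<Sum>l'\<in>I. x l * ?A l l' * x l') = ?S + ?E1 + ?E2"
    using \<open>finite I\<close> assms(2,5) by (intro quadratic_form_split_by_key) auto
  ultimately show ?thesis by (auto simp: algebra_simps abs_le_iff)
qed

end
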